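(* Let $\mathcal R$ be the set of natural numbers $N$ satisfying Robin's inequality $\sigma(N)<e^\gamma N\log(\log N)$. Then $\mathcal R$ has natural density $1$, i.e. $\lim_{s\to\infty}\#(\mathcal R\cap\{1,\dots,s\})/s=1$.
   Context: $\sigma(N)=\sum_{d\mid N}d$ is the sum-of-divisors function and $\gamma$ is the Euler–Mascheroni constant. (For $N\le 2$, $\log\log N$ is undefined or negative and such $N$ are not in $\mathcal R$; this does not affect the density.) *)

theory Defs
  imports "HOL-Analysis.Analysis"
begin

definition divisor_sum :: "nat \<Rightarrow> nat" where
  "divisor_sum N = (\<Sum>d\<in>{d. d dvd N}. d)"

text \<open>Robin's set: N with sigma(N) < e^gamma N log log N; N <= 2 excluded as log log N is
  undefined or negative there.\<close>
definition robin_set :: "nat set" where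
  "robin_set = {N. 2 < N \<and> real (divisor_sum N) < exp euler_mascheroni * real N * ln (ln (real N))}"

end

theory Submission
  imports Defs "HOL-Real_Asymp.Real_Asymp"
begin

text \<open>Writing \<open>\<sigma>(N)/N = \<Sum>\<^sub>d\<^sub>|\<^sub>N 1/d\<close> and swapping summations, the average of \<open>\<sigma>(N)/N\<close> over
  \<open>N \<le> s\<close> is at most \<open>\<Sum>\<^sub>d 1/d\<^sup>2 \<le> 2\<close>. By Markov's inequality, at most \<open>2s/L\<close> of these \<open>N\<close>
  have \<open>\<sigma>(N)/N \<ge> L\<close>. Every \<open>N > K\<close> violating Robin's inequality has
  \<open>\<sigma>(N)/N \<ge> e\<^sup>\<gamma> log log K\<close>, so the exceptions up to \<open>s\<close> number at most
  \<open>K + 2s/(e\<^sup>\<gamma> log log K)\<close>, a proportion that can be made arbitrarily small.\<close>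

lemma divisor_sum_div_self:
  assumes "N > 0"
  shows "real (divisor_sum N) / real N = (\<Sum>d\<in>{d. d dvd N}. 1 / real d)"
proof -
  have "divisor_sum N = (\<Sum>d\<in>{d. d dvd N}. N div d)"
    unfolding divisor_sum_def
    by (rule sum.reindex_bij_witness[where i="\<lambda>d. N div d" and j="\<lambda>d. N div d"])
       (use assms in \<open>auto simp: div_div_eq_right dvd_div_eq_mult intro: dvd_div_mult_self\<close>)
  then have "real (divisor_sum N) = (\<Sum>d\<in>{d. d dvd N}. real N / real d)"
    by (simp add: real_of_nat_div)
  then show ?thesis
    using assms by (simp add: sum_divide_distrib)
qed

lemma sum_inverse_squares_le:
  assumes "n \<ge> 1"
  shows "(\<Sum>d=1..n. 1 / real d ^ 2) \<le> 2 - 1 / real n"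
  using assms
proof (induction n rule: dec_induct)
  case base
  then show ?case by simp
next
  case (step n)
  have n: "real n \<ge> 1"
    using step(1) by simp
  have "1 / (real n + 1) ^ 2 \<le> 1 / (real n * (real n + 1))"
    using n by (intro divide_left_mono) (auto simp: power2_eq_square intro: mult_right_mono)
  also have "\<dots> = 1 / real n - 1 / (real n + 1)"
    using n by (simp add: field_simps)
  finally show ?case
    using step(3) by (simp add: add.commute)
qed

lemma card_multiples_le:
  assumes "d > 0"
  shows "real (card {N\<in>{1..s}. d dvd N}) \<le> real s / real d"
proof -
  have "card {N\<in>{1..s}. d dvd N} \<le> card {1..s div d}"
  proof (rule card_inj_on_le[where f="\<lambda>N. N div d"])
    show "inj_on (\<lambda>N. N div d) {N\<in>{1..s}. d dvd N}"
      by (auto simp: inj_on_def elim!: dvdE)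
    show "(\<lambda>N. N div d) ` {N\<in>{1..s}. d dvd N} \<subseteq> {1..s div d}"
      using assms by (auto elim!: dvdE simp: less_eq_div_iff_mult_less_eq mult.commute)
  qed simp
  then have "real (card {N\<in>{1..s}. d dvd N}) \<le> real (s div d)"
    by simp
  also have "\<dots> \<le> real s / real d"
    using assms div_times_less_eq_dividend[of s d]
    by (simp add: le_divide_eq flip: of_nat_mult)
  finally show ?thesis .
qed

lemma sum_divisor_sum_div_self_le: "(\<Sum>N=1..s. real (divisor_sum N) / real N) \<le> 2 * real s"
proof -
  have "(\<Sum>N=1..s. real (divisor_sum N) / real N)
      = (\<Sum>N=1..s. \<Sum>d\<in>{d\<in>{1..s}. d dvd N}. 1 / real d)"
  proof (rule sum.cong[OF refl])
    fix N assume N: "N \<in> {1..s}"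
    then have "{d. d dvd N} = {d\<in>{1..s}. d dvd N}"
      by (auto dest: dvd_imp_le intro: Nat.gr0I)
    with N show "real (divisor_sum N) / real N = (\<Sum>d\<in>{d\<in>{1..s}. d dvd N}. 1 / real d)"
      using divisor_sum_div_self[of N] by simp
  qed
  also have "\<dots> = (\<Sum>d=1..s. \<Sum>N\<in>{N\<in>{1..s}. d dvd N}. 1 / real d)"
    by (rule sum.swap_restrict) auto
  also have "\<dots> = (\<Sum>d=1..s. real (card {N\<in>{1..s}. d dvd N}) / real d)"
    by simp
  also have "\<dots> \<le> (\<Sum>d=1..s. real s * (1 / real d ^ 2))"
  proof (rule sum_mono)
    fix d assume d: "d \<in> {1..s}"
    then have "real (card {N\<in>{1..s}. d dvd N}) / real d \<le> (real s / real d) / real d"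
      using card_multiples_le[of d s] by (intro divide_right_mono) auto
    then show "real (card {N\<in>{1..s}. d dvd N}) / real d \<le> real s * (1 / real d ^ 2)"
      by (simp add: power2_eq_square)
  qed
  also have "\<dots> = real s * (\<Sum>d=1..s. 1 / real d ^ 2)"
    by (simp add: sum_distrib_left)
  also have "\<dots> \<le> real s * 2"
  proof (cases "s = 0")
    case False
    then have "(\<Sum>d=1..s. 1 / real d ^ 2) \<le> 2 - 1 / real s"
      by (intro sum_inverse_squares_le) simp
    moreover have "0 \<le> 1 / real s"
      by simp
    ultimately have "(\<Sum>d=1..s. 1 / real d ^ 2) \<le> 2"
      by linarith
    then show ?thesis
      by (intro mult_left_mono) auto
  qed simp
  finally show ?thesis
    by simp
qed

lemma card_ge_times_le_sum:
  fixes f :: "'a \<Rightarrow> real"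
  assumes "finite A" and "\<And>x. x \<in> A \<Longrightarrow> 0 \<le> f x"
  shows "real (card {x\<in>A. L \<le> f x}) * L \<le> sum f A"
proof -
  have "real (card {x\<in>A. L \<le> f x}) * L = (\<Sum>x\<in>{x\<in>A. L \<le> f x}. L)"
    by simp
  also have "\<dots> \<le> (\<Sum>x\<in>{x\<in>A. L \<le> f x}. f x)"
    by (rule sum_mono) simp
  also have "\<dots> \<le> sum f A"
    using assms by (intro sum_mono2) auto
  finally show ?thesis .
qed

lemma card_not_robin_le:
  assumes "K \<ge> 3"
  shows "real (card ({1..s} - robin_set))
           \<le> real K + 2 * real s / (exp euler_mascheroni * ln (ln (real K)))"
proof -
  define L where "L = exp euler_mascheroni * ln (ln (real K))"
  define B where "B = {N\<in>{1..s}. L \<le> real (divisor_sum N) / real N}"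
  have "exp 1 < real K"
    using e_less_272 assms by linarith
  then have ln_K: "1 < ln (real K)"
    using assms ln_less_cancel_iff[of "exp 1" "real K"] by simp
  then have "L > 0"
    unfolding L_def by simp
  have "{1..s} - robin_set \<subseteq> {1..K} \<union> B"
  proof
    fix N assume N: "N \<in> {1..s} - robin_set"
    show "N \<in> {1..K} \<union> B"
    proof (cases "N \<le> K")
      case False
      then have "real (divisor_sum N) \<ge> exp euler_mascheroni * real N * ln (ln (real N))"
        using N assms unfolding robin_set_def by auto
      moreover have "ln (ln (real K)) \<le> ln (ln (real N))"
        using False ln_K assms by (subst ln_le_cancel_iff) auto
      then have "L * real N \<le> exp euler_mascheroni * real N * ln (ln (real N))"
        unfolding L_def by (simp add: mult.commute mult.left_commute mult_left_mono)
      ultimately have "L * real N \<le> real (divisor_sum N)"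
        by linarith
      then have "L \<le> real (divisor_sum N) / real N"
        using False by (simp add: le_divide_eq)
      with N show ?thesis
        unfolding B_def by auto
    qed (use N in auto)
  qed
  then have "card ({1..s} - robin_set) \<le> card ({1..K} \<union> B)"
    by (intro card_mono) (auto simp: B_def)
  also have "\<dots> \<le> K + card B"
    using card_Un_le[of "{1..K}" B] by simp
  finally have "real (card ({1..s} - robin_set)) \<le> real K + real (card B)"
    by (simp flip: of_nat_add)
  moreover have "real (card B) * L \<le> 2 * real s"
    using card_ge_times_le_sum[of "{1..s}" "\<lambda>N. real (divisor_sum N) / real N" L]
          sum_divisor_sum_div_self_le[of s]
    unfolding B_def by simp
  then have "real (card B) \<le> 2 * real s / L"
    using \<open>L > 0\<close> by (simp add: le_divide_eq)
  ultimately show ?thesis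
    unfolding L_def by linarith
qed

lemma density_one_if_complement_small:
  fixes A :: "nat set"
  assumes "\<And>\<epsilon>. \<epsilon> > 0 \<Longrightarrow> \<exists>C. \<forall>s. real (card ({1..s} - A)) \<le> C + \<epsilon> * real s"
  shows "(\<lambda>s. real (card (A \<inter> {1..s})) / real s) \<longlonglongrightarrow> 1"
proof (rule LIMSEQ_I)
  fix r :: real assume "r > 0"
  then have "r / 2 > 0"
    by simp
  then obtain C where C: "\<And>s. real (card ({1..s} - A)) \<le> C + r / 2 * real s"
    using assms by blast
  show "\<exists>s0. \<forall>s\<ge>s0. norm (real (card (A \<inter> {1..s})) / real s - 1) < r"
  proof (intro exI allI impI)
    fix s assume s: "s \<ge> nat \<lceil>2 * C / r\<rceil> + 1"
    then have "2 * C / r < real s"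
      using real_nat_ceiling_ge[of "2 * C / r"] by linarith
    then have "C < r / 2 * real s"
      using \<open>r > 0\<close> by (simp add: field_simps)
    have "s > 0"
      using s by simp
    have "card (A \<inter> {1..s}) + card ({1..s} - A) = s"
      using card_Int_Diff[of "{1..s}" A] by (simp add: Int_commute)
    then have "real (card (A \<inter> {1..s})) + real (card ({1..s} - A)) = real s"
      by (metis of_nat_add)
    then have "real (card (A \<inter> {1..s})) = real s - real (card ({1..s} - A))"
      by linarith
    then have "real (card (A \<inter> {1..s})) / real s - 1 = - (real (card ({1..s} - A)) / real s)"
      using \<open>s > 0\<close> by (simp add: diff_divide_distrib)
    moreover have "real (card ({1..s} - A)) / real s < r"
      using C[of s] \<open>C < r / 2 * real s\<close> \<open>s > 0\<close> \<open>r > 0\<close> by (simp add: divide_less_eq)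
    ultimately show "norm (real (card (A \<inter> {1..s})) / real s - 1) < r"
      by simp
  qed
qed

theorem mainTheorem6:
  shows "(\<lambda>s. real (card (robin_set \<inter> {1..s})) / real s) \<longlonglongrightarrow> 1"
proof (rule density_one_if_complement_small)
  fix \<epsilon> :: real assume "\<epsilon> > 0"
  define c :: real where "c = exp euler_mascheroni"
  have "c > 0"
    unfolding c_def by simp
  have "filterlim (\<lambda>K::nat. ln (ln (real K))) at_top sequentially"
    by real_asymp
  then have "\<forall>\<^sub>F K in sequentially. 2 / (c * \<epsilon>) \<le> ln (ln (real K))"
    unfolding filterlim_at_top by blast
  moreover have "\<forall>\<^sub>F K in sequentially. K \<ge> 3"
    by (rule eventually_ge_at_top)
  ultimately obtain K where K: "2 / (c * \<epsilon>) \<le> ln (ln (real K))" "K \<ge> 3"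
    using eventually_happens'[OF sequentially_bot eventually_conj] by blast
  have "2 \<le> c * \<epsilon> * ln (ln (real K))"
    using K(1) \<open>c > 0\<close> \<open>\<epsilon> > 0\<close> by (simp add: pos_divide_le_eq mult.commute)
  moreover have "ln (ln (real K)) > 0"
    using K(1) \<open>c > 0\<close> \<open>\<epsilon> > 0\<close> by (smt (verit) divide_pos_pos mult_pos_pos)
  ultimately have "2 / (c * ln (ln (real K))) \<le> \<epsilon>"
    using \<open>c > 0\<close> by (simp add: divide_le_eq mult.commute mult.left_commute)
  have "real (card ({1..s} - robin_set)) \<le> real K + \<epsilon> * real s" for s
  proof -
    have "2 * real s / (c * ln (ln (real K))) = 2 / (c * ln (ln (real K))) * real s"
      by simp
    also have "\<dots> \<le> \<epsilon> * real s"
      using \<open>2 / (c * ln (ln (real K))) \<le> \<epsilon>\<close> by (intro mult_right_mono) auto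
    finally show ?thesis
      using card_not_robin_le[OF K(2), of s] unfolding c_def by linarith
  qed
  then show "\<exists>C. \<forall>s. real (card ({1..s} - robin_set)) \<le> C + \<epsilon> * real s"
    by blast
qed
end
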